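(* For any finite alphabet $\mathfrak{G}$, the set of co-irreducible elements of the $\mathfrak{G}$-prefix poset is the set of all stringy $\mathfrak{G}$-trees. Moreover, the number of such elements of degree $d\geq 1$ is $\mathcal{R}_\mathfrak{G}(1)\,\mathcal{R}'_\mathfrak{G}(1)^{d-1}$, that is $(\#\mathfrak{G})\,\big(\sum_{\mathtt{a}\in\mathfrak{G}}|\mathtt{a}|\big)^{d-1}$.
   Context: $\mathfrak{G}$ is a finite alphabet (letters with arities $|\mathtt{a}|\geq 1$), and $\mathcal{R}_\mathfrak{G}(t) = \sum_{\mathtt{a}\in\mathfrak{G}} t^{|\mathtt{a}|}$ with derivative $\mathcal{R}'_\mathfrak{G}$. A $\mathfrak{G}$-tree is either the leaf (the tree with no internal node) or a root decorated by a letter $\mathtt{a}\in\mathfrak{G}$ with $|\mathtt{a}|$ children that are $\mathfrak{G}$-trees; its degree is its number of internal nodes. The $\mathfrak{G}$-prefix poset is the set of $\mathfrak{G}$-trees ordered by $\mathfrak{s}\preceq\mathfrak{t}$ iff $\mathfrak{t}$ is obtained by grafting some $\mathfrak{G}$-trees onto the leaves of $\mathfrak{s}$; its covering relation consists in replacing a leaf by an internal node all of whose children are leaves. A tree is co-irreducible if it covers at most one element. A $\mathfrak{G}$-tree is stringy if each of its internal nodes has at most one child that is an internal node. *)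

theory Defs
  imports Main
begin

datatype 'a gtree = Leaf | Node 'a "'a gtree list"

fun is_gtree :: "'a set \<Rightarrow> ('a \<Rightarrow> nat) \<Rightarrow> 'a gtree \<Rightarrow> bool" where
  "is_gtree G ar Leaf = True"
| "is_gtree G ar (Node a ts) =
     (a \<in> G \<and> length ts = ar a \<and> (\<forall>t\<in>set ts. is_gtree G ar t))"

fun degree :: "'a gtree \<Rightarrow> nat" where
  "degree Leaf = 0"
| "degree (Node a ts) = Suc (sum_list (map degree ts))"

text \<open>Prefix order: t is obtained from s by grafting trees onto leaves of s.\<close>
inductive prefix_le :: "'a gtree \<Rightarrow> 'a gtree \<Rightarrow> bool" where
  leaf: "prefix_le Leaf t"
| node: "list_all2 prefix_le ss ts \<Longrightarrow> prefix_le (Node a ss) (Node a ts)"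
monos list_all2_mono

definition prefix_lt :: "'a gtree \<Rightarrow> 'a gtree \<Rightarrow> bool" where
  "prefix_lt s t \<longleftrightarrow> prefix_le s t \<and> s \<noteq> t"

definition covers :: "'a set \<Rightarrow> ('a \<Rightarrow> nat) \<Rightarrow> 'a gtree \<Rightarrow> 'a gtree \<Rightarrow> bool" where
  "covers G ar t s \<longleftrightarrow> is_gtree G ar s \<and> is_gtree G ar t \<and> prefix_lt s t \<and>
     \<not> (\<exists>u. is_gtree G ar u \<and> prefix_lt s u \<and> prefix_lt u t)"

definition co_irreducible :: "'a set \<Rightarrow> ('a \<Rightarrow> nat) \<Rightarrow> 'a gtree \<Rightarrow> bool" where
  "co_irreducible G ar t \<longleftrightarrow>
     (\<forall>s1 s2. covers G ar t s1 \<and> covers G ar t s2 \<longrightarrow> s1 = s2)"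

definition is_internal :: "'a gtree \<Rightarrow> bool" where
  "is_internal t \<longleftrightarrow> t \<noteq> Leaf"

fun stringy :: "'a gtree \<Rightarrow> bool" where
  "stringy Leaf = True"
| "stringy (Node a ts) =
     (length (filter is_internal ts) \<le> 1 \<and> (\<forall>t\<in>set ts. stringy t))"

end

theory Submission
  imports Defs
begin

text \<open>In the prefix poset, t covers s exactly when s arises from t by replacing
  one corolla of t (an internal node all of whose children are leaves) by a leaf.
  So t is co-irreducible iff it has at most one corolla. A stringy tree is a single
  chain of internal nodes, so it has at most one corolla, whereas a node with two internal
  children has a corolla below each of them. Finally, a stringy tree of degree d + 1
  is determined by its root letter a, the position among the |a| children of its
  unique internal child, and that child, a stringy tree of degree d; this gives the
  factor \<Sum>|a| per level.\<close>

inductive prune_step :: "'a gtree \<Rightarrow> 'a gtree \<Rightarrow> bool" where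
  corolla: "\<forall>t\<in>set ts. t = Leaf \<Longrightarrow> prune_step (Node a ts) Leaf"
| child: "i < length ts \<Longrightarrow> prune_step (ts!i) s \<Longrightarrow> prune_step (Node a ts) (Node a (ts[i:=s]))"

lemma prune_step_Leaf [simp]: "\<not> prune_step Leaf s"
  by (auto elim: prune_step.cases)

lemma prune_step_NodeE:
  assumes "prune_step (Node a ts) s"
  obtains "\<forall>t\<in>set ts. t = Leaf" "s = Leaf"
  | i u where "i < length ts" "prune_step (ts!i) u" "s = Node a (ts[i:=u])"
  using assms by (cases rule: prune_step.cases) auto

lemma ex_prune_step: "t \<noteq> Leaf \<Longrightarrow> \<exists>s. prune_step t s"
proof (induction t)
  case (Node a ts)
  show ?case
  proof (cases "\<forall>t\<in>set ts. t = Leaf")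
    case True
    then show ?thesis by (blast intro: prune_step.corolla)
  next
    case False
    then obtain i where "i < length ts" "ts!i \<noteq> Leaf" by (auto simp: in_set_conv_nth)
    with Node.IH show ?thesis by (meson nth_mem prune_step.child)
  qed
qed simp

lemma degree_eq_0_iff [simp]: "degree t = 0 \<longleftrightarrow> t = Leaf"
  by (cases t) auto

lemma sum_list_map_list_update:
  fixes f :: "'a \<Rightarrow> 'b::comm_monoid_add"
  assumes "i < length xs"
  shows "sum_list (map f (xs[i:=x])) + f (xs!i) = sum_list (map f xs) + f x"
  using assms by (induction xs arbitrary: i) (auto simp: add_ac split: nat.split)

lemma degree_prune_step: "prune_step t s \<Longrightarrow> degree t = Suc (degree s)"
proof (induction rule: prune_step.induct)
  case (child i ts s a)
  then show ?case using sum_list_map_list_update[OF child.hyps(1), of degree s] by simp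
qed (simp add: sum_list_eq_0_iff)

lemma is_gtree_prune_step: "prune_step t s \<Longrightarrow> is_gtree G ar t \<Longrightarrow> is_gtree G ar s"
  by (induction rule: prune_step.induct) (auto dest!: set_update_subset_insert[THEN subsetD])

lemma prefix_le_refl: "prefix_le t t"
proof (induction t)
  case (Node a ts)
  then have "list_all2 prefix_le ts ts" by (auto simp: list_all2_conv_all_nth)
  then show ?case by (rule prefix_le.node)
qed (rule prefix_le.leaf)

lemma prefix_le_prune_step: "prune_step t s \<Longrightarrow> prefix_le s t"
proof (induction rule: prune_step.induct)
  case (child i ts s a)
  have "list_all2 prefix_le (ts[i:=s]) (ts[i:=ts!i])"
    using child by (intro list_all2_update_cong) (auto simp: list_all2_conv_all_nth prefix_le_refl)
  then show ?case by (simp add: prefix_le.node)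
qed (rule prefix_le.leaf)

lemma add_mono_eq_imp_eq:
  fixes a b c d :: "'a::ordered_cancel_comm_monoid_add"
  assumes "a \<le> b" "c \<le> d" "a + c = b + d"
  shows "a = b \<and> c = d"
  using assms by (metis add_left_cancel add_left_mono add_right_cancel add_right_mono
      order_antisym_conv)

lemma list_all2_sum_list_map_le:
  fixes f :: "'a \<Rightarrow> 'b::ordered_cancel_comm_monoid_add"
  assumes "list_all2 (\<lambda>x y. f x \<le> f y \<and> (f x = f y \<longrightarrow> x = y)) xs ys"
  shows "sum_list (map f xs) \<le> sum_list (map f ys) \<and>
    (sum_list (map f xs) = sum_list (map f ys) \<longrightarrow> xs = ys)"
  using assms
proof (induction rule: list_all2_induct)
  case (Cons x xs y ys)
  show ?case
  proof
    show "sum_list (map f (x # xs)) \<le> sum_list (map f (y # ys))"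
      using Cons by (simp add: add_mono)
    show "sum_list (map f (x # xs)) = sum_list (map f (y # ys)) \<longrightarrow> x # xs = y # ys"
      using Cons add_mono_eq_imp_eq[of "f x" "f y" "sum_list (map f xs)" "sum_list (map f ys)"]
      by auto
  qed
qed simp

lemma prefix_le_degree:
  "prefix_le s t \<Longrightarrow> degree s \<le> degree t \<and> (degree s = degree t \<longrightarrow> s = t)"
proof (induction rule: prefix_le.induct)
  case (node ss ts a)
  then have "list_all2 (\<lambda>x y. degree x \<le> degree y \<and> (degree x = degree y \<longrightarrow> x = y)) ss ts"
    by (rule list_all2_mono) simp
  from list_all2_sum_list_map_le[OF this] show ?case by simp
qed simp

lemma prefix_lt_degree_less: "prefix_lt s t \<Longrightarrow> degree s < degree t"
  using prefix_le_degree unfolding prefix_lt_def by fastforce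

lemma prefix_lt_prune_step: "prune_step t s \<Longrightarrow> prefix_lt s t"
  using prefix_le_prune_step degree_prune_step unfolding prefix_lt_def by fastforce

lemma prefix_le_neq_ex_prune_step:
  "prefix_le s t \<Longrightarrow> s \<noteq> t \<Longrightarrow> \<exists>u. prune_step t u \<and> prefix_le s u"
proof (induction rule: prefix_le.induct)
  case (leaf t)
  then show ?case using ex_prune_step prefix_le.leaf by metis
next
  case (node ss ts a)
  have len: "length ss = length ts" using node(1) by (rule list_all2_lengthD)
  with node(2) obtain i where i: "i < length ts" "ss!i \<noteq> ts!i"
    by (auto simp: list_eq_iff_nth_eq)
  with node(1) len obtain u where u: "prune_step (ts!i) u" "prefix_le (ss!i) u"
    by (auto dest: list_all2_nthD)
  have "list_all2 prefix_le ss ts" using node(1) by (rule list_all2_mono) simp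
  then have "list_all2 prefix_le (ss[i:=ss!i]) (ts[i:=u])"
    using u by (intro list_all2_update_cong) auto
  then have "prefix_le (Node a ss) (Node a (ts[i:=u]))" by (simp add: prefix_le.node)
  then show ?case using i u by (blast intro: prune_step.child)
qed

lemma covers_iff_prune_step: "covers G ar t s \<longleftrightarrow> is_gtree G ar t \<and> prune_step t s"
proof
  assume cov: "covers G ar t s"
  then have lt: "prefix_lt s t" and t: "is_gtree G ar t" unfolding covers_def by blast+
  then obtain u where u: "prune_step t u" "prefix_le s u"
    using prefix_le_neq_ex_prune_step unfolding prefix_lt_def by blast
  have "prefix_lt u t" using u(1) by (rule prefix_lt_prune_step)
  moreover have "is_gtree G ar u" using u(1) t by (rule is_gtree_prune_step)
  ultimately have "s = u" using cov u(2) unfolding covers_def prefix_lt_def by blast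
  with t u show "is_gtree G ar t \<and> prune_step t s" by simp
next
  assume "is_gtree G ar t \<and> prune_step t s"
  then have t: "is_gtree G ar t" and st: "prune_step t s" by blast+
  have "prefix_lt s t" using st by (rule prefix_lt_prune_step)
  moreover have "\<not> (prefix_lt s u \<and> prefix_lt u t)" for u
  proof
    assume "prefix_lt s u \<and> prefix_lt u t"
    then have "degree s < degree u" "degree u < degree t" using prefix_lt_degree_less by auto
    with degree_prune_step[OF st] show False by simp
  qed
  ultimately show "covers G ar t s"
    using t is_gtree_prune_step[OF st t] unfolding covers_def by blast
qed

lemma length_filter_le_1_iff:
  "length (filter P xs) \<le> 1 \<longleftrightarrow> (\<forall>i<length xs. \<forall>j<length xs. P (xs!i) \<longrightarrow> P (xs!j) \<longrightarrow> i = j)"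
  by (auto simp: length_filter_conv_card card_le_Suc0_iff_eq)

lemma prune_step_neq: "prune_step t s \<Longrightarrow> s \<noteq> t"
  using degree_prune_step by fastforce

lemma prune_step_corolla_eq_Leaf:
  "prune_step (Node a ts) s \<Longrightarrow> \<forall>t\<in>set ts. t = Leaf \<Longrightarrow> s = Leaf"
  by (erule prune_step_NodeE) (auto dest!: nth_mem)

lemma stringy_prune_step_unique: "stringy t \<Longrightarrow> prune_step t s1 \<Longrightarrow> prune_step t s2 \<Longrightarrow> s1 = s2"
proof (induction t arbitrary: s1 s2)
  case (Node a ts)
  show ?case
  proof (cases "\<forall>t\<in>set ts. t = Leaf")
    case True
    with Node.prems show ?thesis using prune_step_corolla_eq_Leaf by metis
  next
    case False
    from Node.prems(2) False obtain i u
      where i: "i < length ts" "prune_step (ts!i) u" "s1 = Node a (ts[i:=u])"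
      by (cases rule: prune_step_NodeE) auto
    from Node.prems(3) False obtain j v
      where j: "j < length ts" "prune_step (ts!j) v" "s2 = Node a (ts[j:=v])"
      by (cases rule: prune_step_NodeE) auto
    have "length (filter is_internal ts) \<le> 1" using Node.prems(1) by simp
    then have "i = j" using i j prune_step_Leaf unfolding length_filter_le_1_iff is_internal_def
      by metis
    moreover have "u = v"
      using Node.IH[OF nth_mem[OF i(1)]] Node.prems(1) i j \<open>i = j\<close> by (simp add: nth_mem)
    ultimately show ?thesis using i j by simp
  qed
qed simp

lemma not_stringy_two_prune_steps:
  "\<not> stringy t \<Longrightarrow> \<exists>s1 s2. prune_step t s1 \<and> prune_step t s2 \<and> s1 \<noteq> s2"
proof (induction t)
  case (Node a ts)
  show ?case
  proof (cases "length (filter is_internal ts) \<le> 1")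
    case False
    then obtain i j where ij: "i < length ts" "j < length ts" "i \<noteq> j"
      "ts!i \<noteq> Leaf" "ts!j \<noteq> Leaf"
      unfolding length_filter_le_1_iff is_internal_def by blast
    then obtain u v where "prune_step (ts!i) u" "prune_step (ts!j) v"
      using ex_prune_step by meson
    moreover from this have "ts[i:=u] \<noteq> ts[j:=v]"
      using ij prune_step_neq by (metis nth_list_update_eq nth_list_update_neq)
    ultimately show ?thesis using ij by (blast intro: prune_step.child)
  next
    case True
    with Node.prems obtain i where i: "i < length ts" "\<not> stringy (ts!i)"
      by (auto simp: in_set_conv_nth)
    with Node.IH obtain u v where "prune_step (ts!i) u" "prune_step (ts!i) v" "u \<noteq> v"
      by (meson nth_mem)
    moreover from this have "ts[i:=u] \<noteq> ts[i:=v]" using i by (metis nth_list_update_eq)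
    ultimately show ?thesis using i by (blast intro: prune_step.child)
  qed
qed simp

lemma co_irreducible_iff_stringy:
  "is_gtree G ar t \<Longrightarrow> co_irreducible G ar t \<longleftrightarrow> stringy t"
  unfolding co_irreducible_def covers_iff_prune_step
  using stringy_prune_step_unique not_stringy_two_prune_steps by blast

definition lone_child_node :: "'a \<Rightarrow> nat \<Rightarrow> nat \<Rightarrow> 'a gtree \<Rightarrow> 'a gtree" where
  "lone_child_node a n i t = Node a ((replicate n Leaf)[i:=t])"

lemma degree_lone_child_node: "i < n \<Longrightarrow> degree (lone_child_node a n i t) = Suc (degree t)"
  using sum_list_map_list_update[of i "replicate n Leaf" degree t]
  by (simp add: lone_child_node_def)

lemma is_gtree_lone_child_node:
  "a \<in> G \<Longrightarrow> is_gtree G ar t \<Longrightarrow> is_gtree G ar (lone_child_node a (ar a) i t)"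
  by (auto simp: lone_child_node_def dest!: set_update_subset_insert[THEN subsetD])

lemma stringy_lone_child_node:
  assumes "stringy t"
  shows "stringy (lone_child_node a n i t)"
proof -
  have "k = i" if "k < n" "is_internal ((replicate n Leaf)[i:=t] ! k)" for k
    using that by (cases "k = i") (auto simp: is_internal_def)
  then have "length (filter is_internal ((replicate n Leaf)[i:=t])) \<le> 1"
    unfolding length_filter_le_1_iff length_list_update length_replicate by blast
  with assms show ?thesis
    by (auto simp: lone_child_node_def dest!: set_update_subset_insert[THEN subsetD])
qed

lemma lone_child_node_inject:
  assumes "lone_child_node a n i t = lone_child_node a' n' i' t'"
    and "i < n" "t \<noteq> Leaf"
  shows "a = a' \<and> i = i' \<and> t = t'"
proof -
  have a: "a = a'" and children: "(replicate n Leaf)[i:=t] = (replicate n' Leaf)[i':=t']"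
    using assms(1) by (auto simp: lone_child_node_def)
  from children have "length ((replicate n Leaf)[i:=t]) = length ((replicate n' Leaf)[i':=t'])"
    by simp
  then have "n = n'" by simp
  from children have "(replicate n Leaf)[i:=t] ! i = (replicate n' Leaf)[i':=t'] ! i" by simp
  with \<open>n = n'\<close> assms(2) have "t = (if i = i' then t' else Leaf)" by (simp add: nth_list_update)
  with a assms(3) show ?thesis by (simp split: if_splits)
qed

lemma stringy_Node_eq_lone_child_node:
  assumes "stringy (Node a ts)" "i < length ts" "ts!i \<noteq> Leaf"
  shows "Node a ts = lone_child_node a (length ts) i (ts!i)"
proof -
  have "length (filter is_internal ts) \<le> 1" using assms(1) by simp
  then have "ts!j = Leaf" if "j < length ts" "j \<noteq> i" for j
    using assms(2,3) that unfolding length_filter_le_1_iff is_internal_def by blast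
  then have "ts!j = (replicate (length ts) Leaf)[i:=ts!i] ! j" if "j < length ts" for j
    using that by (cases "j = i") auto
  then show ?thesis unfolding lone_child_node_def by (simp add: nth_equalityI)
qed

definition stringy_trees :: "'a set \<Rightarrow> ('a \<Rightarrow> nat) \<Rightarrow> nat \<Rightarrow> 'a gtree set" where
  "stringy_trees G ar d = {t. is_gtree G ar t \<and> stringy t \<and> degree t = d}"

lemma stringy_trees_Suc_0: "stringy_trees G ar (Suc 0) = (\<lambda>a. Node a (replicate (ar a) Leaf)) ` G"
proof
  show "stringy_trees G ar (Suc 0) \<subseteq> (\<lambda>a. Node a (replicate (ar a) Leaf)) ` G"
  proof
    fix t assume t: "t \<in> stringy_trees G ar (Suc 0)"
    then obtain a ts where t_eq: "t = Node a ts" by (cases t) (auto simp: stringy_trees_def)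
    with t have "ts = replicate (ar a) Leaf" "a \<in> G"
      by (auto simp: stringy_trees_def sum_list_eq_0_iff intro: replicate_eqI)
    with t_eq show "t \<in> (\<lambda>a. Node a (replicate (ar a) Leaf)) ` G" by blast
  qed
qed (auto simp: stringy_trees_def is_internal_def)

lemma stringy_trees_Suc_Suc:
  "stringy_trees G ar (Suc (Suc k)) =
    (\<lambda>(a, i, t). lone_child_node a (ar a) i t) ` (SIGMA a:G. {..<ar a} \<times> stringy_trees G ar (Suc k))"
proof
  show "stringy_trees G ar (Suc (Suc k)) \<subseteq>
    (\<lambda>(a, i, t). lone_child_node a (ar a) i t) ` (SIGMA a:G. {..<ar a} \<times> stringy_trees G ar (Suc k))"
  proof
    fix t assume t: "t \<in> stringy_trees G ar (Suc (Suc k))"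
    then obtain a ts where t_eq: "t = Node a ts" by (cases t) (auto simp: stringy_trees_def)
    with t have a: "a \<in> G" "length ts = ar a" by (auto simp: stringy_trees_def)
    from t t_eq have "sum_list (map degree ts) \<noteq> 0" by (simp add: stringy_trees_def)
    then obtain i where i: "i < length ts" "ts!i \<noteq> Leaf"
      by (auto simp: sum_list_eq_0_iff in_set_conv_nth)
    with t t_eq a have lone: "t = lone_child_node a (ar a) i (ts!i)"
      using stringy_Node_eq_lone_child_node by (fastforce simp: stringy_trees_def)
    have "degree t = Suc (Suc k)" using t by (simp add: stringy_trees_def)
    with lone i a have "degree (ts!i) = Suc k" by (simp add: degree_lone_child_node)
    with t t_eq have "ts!i \<in> stringy_trees G ar (Suc k)"
      using i(1) by (simp add: stringy_trees_def)
    with lone i a show "t \<in> (\<lambda>(a, i, t). lone_child_node a (ar a) i t) `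
      (SIGMA a:G. {..<ar a} \<times> stringy_trees G ar (Suc k))" by force
  qed
qed (auto simp: stringy_trees_def degree_lone_child_node stringy_lone_child_node
    is_gtree_lone_child_node)

lemma inj_on_lone_child_node:
  "inj_on (\<lambda>(a, i, t). lone_child_node a (ar a) i t) (SIGMA a:G. {..<ar a} \<times> stringy_trees G ar (Suc k))"
proof (rule inj_onI, clarify)
  fix a i t a' i' t'
  assume "lone_child_node a (ar a) i t = lone_child_node a' (ar a') i' t'"
    and "i < ar a" "t \<in> stringy_trees G ar (Suc k)"
  then show "a = a' \<and> (i, t) = (i', t')"
    using lone_child_node_inject by (fastforce simp: stringy_trees_def)
qed

lemma finite_stringy_trees: "finite G \<Longrightarrow> finite (stringy_trees G ar (Suc k))"
  by (induction k) (simp_all add: stringy_trees_Suc_0 stringy_trees_Suc_Suc)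

lemma card_stringy_trees:
  assumes "finite G"
  shows "card (stringy_trees G ar (Suc k)) = card G * (\<Sum>a\<in>G. ar a) ^ k"
proof (induction k)
  case 0
  have "inj_on (\<lambda>a. Node a (replicate (ar a) Leaf)) G" by (rule inj_onI) simp
  then show ?case by (simp add: stringy_trees_Suc_0 card_image)
next
  case (Suc k)
  have "card (stringy_trees G ar (Suc (Suc k))) =
      card (SIGMA a:G. {..<ar a} \<times> stringy_trees G ar (Suc k))"
    by (simp add: stringy_trees_Suc_Suc card_image[OF inj_on_lone_child_node])
  also have "\<dots> = (\<Sum>a\<in>G. ar a) * card (stringy_trees G ar (Suc k))"
    using assms finite_stringy_trees[OF assms]
    by (simp add: card_SigmaI card_cartesian_product sum_distrib_right)
  finally show ?case using Suc by simp
qed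

theorem proposition3p6:
  fixes G :: "'a set" and ar :: "'a \<Rightarrow> nat"
  assumes "finite G"
    and "\<And>a. a \<in> G \<Longrightarrow> ar a \<ge> 1"
  shows "{t. is_gtree G ar t \<and> co_irreducible G ar t} = {t. is_gtree G ar t \<and> stringy t} \<and>
         (\<forall>d\<ge>1.
           card {t. is_gtree G ar t \<and> co_irreducible G ar t \<and> degree t = d}
             = card G * (\<Sum>a\<in>G. ar a) ^ (d - 1))"
proof (intro conjI allI impI)
  show "{t. is_gtree G ar t \<and> co_irreducible G ar t} = {t. is_gtree G ar t \<and> stringy t}"
    using co_irreducible_iff_stringy by blast
next
  fix d :: nat
  assume "d \<ge> 1"
  then obtain k where d: "d = Suc k" using not0_implies_Suc by fastforce
  have "{t. is_gtree G ar t \<and> co_irreducible G ar t \<and> degree t = d} = stringy_trees G ar d"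
    using co_irreducible_iff_stringy unfolding stringy_trees_def by blast
  with d show "card {t. is_gtree G ar t \<and> co_irreducible G ar t \<and> degree t = d}
      = card G * (\<Sum>a\<in>G. ar a) ^ (d - 1)"
    using card_stringy_trees[OF assms(1)] by simp
qed

end
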